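(* There is an absolute constant $\delta>0$ such that for every constant $c_1\in(0,0.01)$, every sufficiently large $a$, every set $A$ of size $a$ and every $r\in\{0,1\}^A$, at least one of the functions $x\mapsto h^{(-,0)}(x\oplus r)$ and $x\mapsto h^{(-,1)}(x\oplus r)$ on $\{0,1\}^A$ has distance at least $\delta$ from every monotone function on $\{0,1\}^A$.
   Context: On $\{0,1\}^A$ with $|A|=a$: $h^{(-,0)}(z)=1$ iff $|z|>a/2+c_1\sqrt a$, and $h^{(-,1)}(z)=1$ iff $|z|<a/2-c_1\sqrt a$, where $|z|$ is Hamming weight. $\oplus$ is coordinatewise XOR. Distance between functions is the fraction of points of $\{0,1\}^A$ (uniform measure) on which they differ; monotone means $f(x)\le f(y)$ whenever $x\le y$ coordinatewise. *)

theory Defs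
  imports Complex_Main
begin

text \<open>Points of {0,1}^A are represented as Boolean functions on nat vanishing outside A.\<close>
definition cube :: "nat set \<Rightarrow> (nat \<Rightarrow> bool) set" where
  "cube A = {x. \<forall>i. i \<notin> A \<longrightarrow> \<not> x i}"

definition hweight :: "nat set \<Rightarrow> (nat \<Rightarrow> bool) \<Rightarrow> nat" where
  "hweight A z = card {i \<in> A. z i}"

definition xorv :: "(nat \<Rightarrow> bool) \<Rightarrow> (nat \<Rightarrow> bool) \<Rightarrow> (nat \<Rightarrow> bool)" where
  "xorv x r = (\<lambda>i. x i \<noteq> r i)"

definition h_minus_0 :: "real \<Rightarrow> nat set \<Rightarrow> (nat \<Rightarrow> bool) \<Rightarrow> bool" where
  "h_minus_0 c1 A z \<longleftrightarrow> real (hweight A z) > real (card A) / 2 + c1 * sqrt (real (card A))"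

definition h_minus_1 :: "real \<Rightarrow> nat set \<Rightarrow> (nat \<Rightarrow> bool) \<Rightarrow> bool" where
  "h_minus_1 c1 A z \<longleftrightarrow> real (hweight A z) < real (card A) / 2 - c1 * sqrt (real (card A))"

definition monotone_cube :: "nat set \<Rightarrow> ((nat \<Rightarrow> bool) \<Rightarrow> bool) \<Rightarrow> bool" where
  "monotone_cube A f \<longleftrightarrow>
     (\<forall>x\<in>cube A. \<forall>y\<in>cube A. (\<forall>i\<in>A. x i \<longrightarrow> y i) \<longrightarrow> (f x \<longrightarrow> f y))"

definition fdist :: "nat set \<Rightarrow> ((nat \<Rightarrow> bool) \<Rightarrow> bool) \<Rightarrow> ((nat \<Rightarrow> bool) \<Rightarrow> bool) \<Rightarrow> real" where
  "fdist A f g = real (card {x \<in> cube A. f x \<noteq> g x}) / 2 ^ card A"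

end

theory Submission
  imports Defs
begin

text \<open>Complementing $r$ swaps $h^{(-,0)}$ and $h^{(-,1)}$, so we may assume that the set $S$ of ones of
  $r$ has $s \ge a/2$ elements. In the coordinates $Z = \{i.\ x_i \neq r_i\}$ the function
  $h^{(-,0)}(x \oplus r)$ is the threshold $|Z| > a/2 + c\sqrt a$, and a monotone $g$ becomes a function
  $G$ that stays true when elements of $S$ are removed from $Z$. By Paley--Zygmund and Chebyshev, at
  least $2^a/12$ sets $Z$ satisfy $c\sqrt a < |Z| - a/2 \le 3\sqrt a$ and
  $|Z \cap S| \ge s/2 - 3\sqrt s$. Removing any $k \approx 3\sqrt a$ elements $U$ of $Z \cap S$ drops
  such a $Z$ below the threshold, so $G$ disagrees with the threshold at $Z$ or at $Z - U$. Each
  disagreement point $Z'$ is reached from at most $\binom{s-p}{k}$ pairs $(Z, U)$, where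
  $p = |Z' \cap S|$ and $p + k = |Z \cap S| \ge s/2 - 3\sqrt s$, while each $Z$ has $\binom{p+k}{k}$ choices of $U$; the ratio is at
  most $e^{320}$, giving distance at least $1/(12(1 + e^{320}))$.\<close>

lemma sum_Pow_insert:
  assumes "finite A" "i \<notin> A"
  shows "(\<Sum>Z\<in>Pow (insert i A). f Z) = (\<Sum>Z\<in>Pow A. f Z) + (\<Sum>Z\<in>Pow A. f (insert i Z))"
proof -
  have "inj_on (insert i) (Pow A)" using assms(2) by (auto simp: inj_on_def)
  moreover have "Pow A \<inter> insert i ` Pow A = {}" using assms(2) by auto
  ultimately show ?thesis
    unfolding Pow_insert using assms(1) by (simp add: sum.union_disjoint sum.reindex)
qed

lemma sum_Pow_insert_card_Int:
  fixes f :: "nat \<Rightarrow> 'b::comm_monoid_add"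
  assumes "finite A" "i \<notin> A"
  shows "(\<Sum>Z\<in>Pow (insert i A). f (card (Z \<inter> S)))
           = (\<Sum>Z\<in>Pow A. f (card (Z \<inter> S)) + f (card (Z \<inter> S) + of_bool (i \<in> S)))"
proof -
  have "card (insert i Z \<inter> S) = card (Z \<inter> S) + of_bool (i \<in> S)" if "Z \<subseteq> A" for Z
  proof -
    have "finite Z" "i \<notin> Z" using assms that finite_subset by auto
    then show ?thesis by (auto simp: Int_insert_left)
  qed
  then show ?thesis by (simp add: sum_Pow_insert[OF assms] sum.distrib)
qed

lemma sum_Pow_card_Int_deviation_sq:
  assumes "finite A"
  shows "(\<Sum>Z\<in>Pow A. (real (card (Z \<inter> S)) - real (card (A \<inter> S)) / 2)^2)
           = real (card (A \<inter> S)) * 2 ^ card A / 4"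
  using assms
proof (induction A rule: finite_induct)
  case empty
  then show ?case by simp
next
  case (insert i A)
  define m where "m = real (card (A \<inter> S))"
  define e :: real where "e = of_bool (i \<in> S) / 2"
  define d where "d Z = real (card (Z \<inter> S)) - m / 2" for Z
  have shift: "real (card (Z \<inter> S)) - (m + 2 * e) / 2 = d Z - e"
    "real (card (Z \<inter> S) + of_bool (i \<in> S)) - (m + 2 * e) / 2 = d Z + e" for Z
    by (simp_all add: d_def e_def field_simps)
  have m': "real (card (insert i A \<inter> S)) = m + 2 * e"
    by (simp add: m_def e_def Int_insert_left insert(1,2) card_insert_if)
  have "(\<Sum>Z\<in>Pow (insert i A). (real (card (Z \<inter> S)) - (m + 2 * e) / 2)^2)
      = (\<Sum>Z\<in>Pow A. (d Z - e)^2 + (d Z + e)^2)"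
    unfolding sum_Pow_insert_card_Int[OF insert(1,2), where f="\<lambda>n. (real n - (m + 2 * e) / 2)^2"]
    by (simp only: shift)
  also have "\<dots> = 2 * (\<Sum>Z\<in>Pow A. (d Z)^2) + 2 * e^2 * 2 ^ card A"
    using insert(1) by (simp add: power2_eq_square algebra_simps sum.distrib sum_distrib_left card_Pow)
  also have "\<dots> = (m + 2 * e) * 2 ^ card (insert i A) / 4"
    using insert(1,2,3) by (simp add: d_def m_def e_def power2_eq_square field_simps)
  finally show ?case unfolding m' .
qed

lemma sum_Pow_card_Int_deviation_pow4:
  assumes "finite A"
  shows "(\<Sum>Z\<in>Pow A. (real (card (Z \<inter> S)) - real (card (A \<inter> S)) / 2)^4)
           = (3 * real (card (A \<inter> S))^2 - 2 * real (card (A \<inter> S))) * 2 ^ card A / 16"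
  using assms
proof (induction A rule: finite_induct)
  case empty
  then show ?case by simp
next
  case (insert i A)
  define m where "m = real (card (A \<inter> S))"
  define e :: real where "e = of_bool (i \<in> S) / 2"
  define d where "d Z = real (card (Z \<inter> S)) - m / 2" for Z
  have shift: "real (card (Z \<inter> S)) - (m + 2 * e) / 2 = d Z - e"
    "real (card (Z \<inter> S) + of_bool (i \<in> S)) - (m + 2 * e) / 2 = d Z + e" for Z
    by (simp_all add: d_def e_def field_simps)
  have m': "real (card (insert i A \<inter> S)) = m + 2 * e"
    by (simp add: m_def e_def Int_insert_left insert(1,2) card_insert_if)
  have "(\<Sum>Z\<in>Pow (insert i A). (real (card (Z \<inter> S)) - (m + 2 * e) / 2)^4)
      = (\<Sum>Z\<in>Pow A. (d Z - e)^4 + (d Z + e)^4)"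
    unfolding sum_Pow_insert_card_Int[OF insert(1,2), where f="\<lambda>n. (real n - (m + 2 * e) / 2)^4"]
    by (simp only: shift)
  also have "\<dots> = 2 * (\<Sum>Z\<in>Pow A. (d Z)^4) + 12 * e^2 * (\<Sum>Z\<in>Pow A. (d Z)^2) + 2 * e^4 * 2 ^ card A"
    using insert(1)
    by (simp add: power2_eq_square power4_eq_xxxx algebra_simps sum.distrib sum_distrib_left card_Pow)
  also have "\<dots> = (3 * (m + 2 * e)^2 - 2 * (m + 2 * e)) * 2 ^ card (insert i A) / 16"
  proof -
    have sq: "(\<Sum>Z\<in>Pow A. (d Z)^2) = m * 2 ^ card A / 4"
      using sum_Pow_card_Int_deviation_sq[OF insert(1)] by (simp add: d_def m_def)
    have p4: "(\<Sum>Z\<in>Pow A. (d Z)^4) = (3 * m^2 - 2 * m) * 2 ^ card A / 16"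
      using insert(3) by (simp add: d_def m_def)
    show ?thesis
      unfolding sq p4 using insert(1,2)
      by (cases "i \<in> S") (simp_all add: e_def power2_eq_square power4_eq_xxxx field_simps)
  qed
  finally show ?case unfolding m' .
qed

lemma sum_Pow_card_deviation_sq:
  assumes "finite A"
  shows "(\<Sum>Z\<in>Pow A. (real (card Z) - real (card A) / 2)^2) = real (card A) * 2 ^ card A / 4"
proof -
  have "(\<Sum>Z\<in>Pow A. f (card (Z \<inter> A))) = (\<Sum>Z\<in>Pow A. f (card Z))" for f :: "nat \<Rightarrow> real"
    by (rule sum.cong) (auto simp: Int_absorb2)
  from this[of "\<lambda>n. (real n - real (card A) / 2)^2"] show ?thesis
    using sum_Pow_card_Int_deviation_sq[OF assms, of A] by simp
qed

lemma sum_Pow_card_deviation_pow4: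
  assumes "finite A"
  shows "(\<Sum>Z\<in>Pow A. (real (card Z) - real (card A) / 2)^4)
           = (3 * real (card A)^2 - 2 * real (card A)) * 2 ^ card A / 16"
proof -
  have "(\<Sum>Z\<in>Pow A. f (card (Z \<inter> A))) = (\<Sum>Z\<in>Pow A. f (card Z))" for f :: "nat \<Rightarrow> real"
    by (rule sum.cong) (auto simp: Int_absorb2)
  from this[of "\<lambda>n. (real n - real (card A) / 2)^4"] show ?thesis
    using sum_Pow_card_Int_deviation_pow4[OF assms, of A] by simp
qed

lemma card_filter_mult_le_sum:
  fixes \<phi> :: "'a \<Rightarrow> real"
  assumes "finite B" "\<And>Z. Z \<in> B \<Longrightarrow> 0 \<le> \<phi> Z" "\<And>Z. Z \<in> B \<Longrightarrow> P Z \<Longrightarrow> l \<le> \<phi> Z"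
  shows "l * real (card {Z\<in>B. P Z}) \<le> (\<Sum>Z\<in>B. \<phi> Z)"
proof -
  have "l * real (card {Z\<in>B. P Z}) = (\<Sum>Z\<in>{Z\<in>B. P Z}. l)" by simp
  also have "\<dots> \<le> (\<Sum>Z\<in>{Z\<in>B. P Z}. \<phi> Z)" by (rule sum_mono) (use assms in auto)
  also have "\<dots> \<le> (\<Sum>Z\<in>B. \<phi> Z)" by (rule sum_mono2) (use assms in auto)
  finally show ?thesis .
qed

lemma card_Pow_card_Int_far_from_mean_le:
  assumes "finite A" "0 < t"
  shows "real (card {Z\<in>Pow A. t \<le> \<bar>real (card (Z \<inter> S)) - real (card (A \<inter> S)) / 2\<bar>})
           \<le> real (card (A \<inter> S)) * 2 ^ card A / (4 * t^2)"
proof -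
  have "t^2 * real (card {Z\<in>Pow A. t \<le> \<bar>real (card (Z \<inter> S)) - real (card (A \<inter> S)) / 2\<bar>})
      \<le> (\<Sum>Z\<in>Pow A. (real (card (Z \<inter> S)) - real (card (A \<inter> S)) / 2)^2)"
    by (rule card_filter_mult_le_sum)
      (use assms in \<open>auto simp: abs_le_square_iff[symmetric] intro: order.trans[OF _ abs_ge_self]\<close>)
  also have "\<dots> = real (card (A \<inter> S)) * 2 ^ card A / 4"
    by (rule sum_Pow_card_Int_deviation_sq[OF assms(1)])
  finally show ?thesis
    using assms(2) by (simp add: pos_le_divide_eq mult.commute mult.left_commute)
qed

lemma card_Pow_upper_tail_eq_lower_tail:
  assumes "finite A"
  shows "card {Z\<in>Pow A. t < real (card Z) - real (card A) / 2}
           = card {Z\<in>Pow A. real (card Z) - real (card A) / 2 < - t}"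
proof -
  have "real (card (A - Z)) = real (card A) - real (card Z)" if "Z \<subseteq> A" for Z
    using assms that by (simp add: card_Diff_subset finite_subset card_mono of_nat_diff)
  then have "bij_betw (\<lambda>Z. A - Z) {Z\<in>Pow A. t < real (card Z) - real (card A) / 2}
               {Z\<in>Pow A. real (card Z) - real (card A) / 2 < - t}"
    by (intro bij_betw_byWitness[where f'="\<lambda>Z. A - Z"]) auto
  then show ?thesis by (rule bij_betw_same_card)
qed

lemma le_threshold_plus_indicator:
  fixes Y \<tau> \<mu> :: real
  assumes "0 \<le> Y" "0 < \<mu>" "0 \<le> \<tau>"
  shows "Y \<le> \<tau> + (Y^2 / \<mu> + \<mu> * of_bool (\<tau> < Y)) / 2"
proof (cases "\<tau> < Y")
  case True
  have "2 * Y * \<mu> \<le> Y^2 + \<mu>^2" using zero_le_power2[of "Y - \<mu>"] by (simp add: power2_eq_square algebra_simps)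
  then have "Y \<le> (Y^2 / \<mu> + \<mu>) / 2" using assms by (simp add: field_simps power2_eq_square)
  moreover have "\<tau> + (Y^2 / \<mu> + \<mu> * of_bool (\<tau> < Y)) / 2 = \<tau> + (Y^2 / \<mu> + \<mu>) / 2"
    using True by simp
  ultimately show ?thesis using assms(3) by linarith
next
  case False
  show ?thesis by (rule add_increasing2) (use False assms in auto)
qed

text \<open>Paley--Zygmund: sum \<open>le_threshold_plus_indicator\<close> over $Y = (|Z| - a/2)^2$ with
  $\mu = 3a/4$ and compare the second and fourth moments.\<close>

lemma card_Pow_deviation_sq_gt_ge:
  assumes "finite A" "0 < card A" "0 \<le> c" "c < 0.01"
  shows "0.3 * 2 ^ card A \<le> real (card {Z\<in>Pow A. c^2 * real (card A) < (real (card Z) - real (card A) / 2)^2})"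
proof -
  define a where "a = real (card A)"
  define N where "N = (2::real) ^ card A"
  define Y where "Y Z = (real (card Z) - a / 2)^2" for Z :: "'a set"
  define \<tau> where "\<tau> = c^2 * a"
  define \<mu> where "\<mu> = 3 * a / 4"
  define cnt where "cnt = real (card {Z\<in>Pow A. \<tau> < Y Z})"
  have a0: "0 < a" using assms by (simp add: a_def)
  have \<tau>: "\<tau> \<le> 0.0001 * a"
  proof -
    have "c * c \<le> 0.01 * 0.01" using assms by (intro mult_mono) auto
    then show ?thesis using a0 by (simp add: \<tau>_def power2_eq_square)
  qed
  have "(\<Sum>Z\<in>Pow A. Y Z) \<le> (\<Sum>Z\<in>Pow A. \<tau> + ((Y Z)^2 / \<mu> + \<mu> * of_bool (\<tau> < Y Z)) / 2)"
    by (intro sum_mono le_threshold_plus_indicator) (use a0 in \<open>auto simp: \<mu>_def \<tau>_def Y_def\<close>)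
  also have "\<dots> = \<tau> * N + (\<Sum>Z\<in>Pow A. (Y Z)^2) / (2 * \<mu>) + \<mu> / 2 * cnt"
    using assms(1)
    by (simp add: sum.distrib add_divide_distrib sum_divide_distrib[symmetric] sum_distrib_left[symmetric]
        card_Pow N_def cnt_def Int_def conj_commute)
  finally have "a * N / 4 \<le> \<tau> * N + (3 * a^2 - 2 * a) * N / 16 / (2 * \<mu>) + \<mu> / 2 * cnt"
    using sum_Pow_card_deviation_sq[OF assms(1)] sum_Pow_card_deviation_pow4[OF assms(1)]
    by (simp add: Y_def a_def N_def power_mult[symmetric])
  moreover have "(3 * a^2 - 2 * a) * N / 16 / (2 * \<mu>) \<le> a * N / 8"
    using a0 by (simp add: \<mu>_def N_def field_simps power2_eq_square)
  moreover have "\<tau> * N \<le> 0.0001 * a * N" using \<tau> by (simp add: N_def)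
  moreover have "\<mu> / 2 * cnt = 3 * a / 8 * cnt" by (simp add: \<mu>_def)
  ultimately have "a * N / 8 - 0.0001 * a * N \<le> 3 * a / 8 * cnt" by linarith
  then have "N * 1249 \<le> cnt * 3750" using a0 by (simp add: field_simps)
  moreover have "0 \<le> N" by (simp add: N_def)
  ultimately have "0.3 * N \<le> cnt" by linarith
  then show ?thesis by (simp add: N_def cnt_def Y_def \<tau>_def a_def)
qed

lemma card_Pow_upper_tail_ge:
  assumes "finite A" "0 < card A" "0 \<le> c" "c < 0.01"
  shows "0.15 * 2 ^ card A
           \<le> real (card {Z\<in>Pow A. c * sqrt (real (card A)) < real (card Z) - real (card A) / 2})"
proof -
  define t where "t = c * sqrt (real (card A))"
  define W where "W Z = real (card Z) - real (card A) / 2" for Z :: "'a set"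
  have t0: "0 \<le> t" using assms by (simp add: t_def)
  have "w^2 > t^2 \<longleftrightarrow> t < w \<or> w < - t" for w :: real
    using t0 abs_le_square_iff[of w t] by (auto simp: not_le[symmetric] abs_le_iff)
  then have "{Z\<in>Pow A. t^2 < (W Z)^2} = {Z\<in>Pow A. t < W Z} \<union> {Z\<in>Pow A. W Z < - t}"
    by auto
  moreover have "{Z\<in>Pow A. t < W Z} \<inter> {Z\<in>Pow A. W Z < - t} = {}" using t0 by auto
  ultimately have "card {Z\<in>Pow A. t^2 < (W Z)^2} = 2 * card {Z\<in>Pow A. t < W Z}"
    using card_Pow_upper_tail_eq_lower_tail[OF assms(1), of t] assms(1)
    by (simp add: card_Un_disjoint W_def)
  moreover have "t^2 = c^2 * real (card A)" by (simp add: t_def power_mult_distrib)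
  ultimately show ?thesis
    using card_Pow_deviation_sq_gt_ge[OF assms] by (simp add: W_def t_def)
qed

lemma binomial_le_power_mult:
  fixes q :: real
  assumes "k \<le> m" "0 \<le> q" "\<And>j. j < k \<Longrightarrow> real n - real j \<le> q * (real m - real j)"
  shows "real (n choose k) \<le> q^k * real (m choose k)"
  using assms
proof (induction k)
  case 0
  then show ?case by simp
next
  case (Suc k)
  have IH: "real (n choose k) \<le> q^k * real (m choose k)" using Suc by auto
  have absorb: "real (Suc k) * real (l choose Suc k) = real (l - k) * real (l choose k)" for l
    using binomial_absorption[of k l] binomial_absorb_comp[of l k] by (metis of_nat_mult)
  have "real (n - k) \<le> q * (real m - real k)"
  proof (cases "k \<le> n")
    case True
    then show ?thesis using Suc.prems(3)[of k] by (simp add: of_nat_diff)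
  next
    case False
    then show ?thesis using Suc.prems(1,2) by simp
  qed
  then have "real (Suc k) * real (n choose Suc k) \<le> (q * (real m - real k)) * (q^k * real (m choose k))"
    unfolding absorb using IH Suc.prems(1,2) by (intro mult_mono) auto
  also have "\<dots> = q^Suc k * (real (m - k) * real (m choose k))"
    using Suc.prems(1) by (simp add: of_nat_diff mult_ac)
  also have "\<dots> = real (Suc k) * (q^Suc k * real (m choose Suc k))"
    unfolding absorb[symmetric] by (simp only: mult.left_commute)
  finally show ?case by (simp only: mult_le_cancel_left_pos of_nat_0_less_iff zero_less_Suc)
qed

lemma half_plus_over_half_minus_le:
  fixes s E :: real
  assumes "0 < s" "0 \<le> E" "E \<le> s / 4"
  shows "(s / 2 + E) / (s / 2 - E) \<le> 1 + 8 * E / s"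
proof -
  have "8 * E * E \<le> 2 * E * s" using mult_left_mono[of "4 * E" s "2 * E"] assms by simp
  then have "8 * E * E / s \<le> 2 * E" using assms(1) by (simp add: divide_le_eq)
  moreover have "(1 + 8 * E / s) * (s / 2 - E) = s / 2 + 3 * E - 8 * E * E / s"
    using assms(1) by (simp add: field_simps)
  ultimately have "s / 2 + E \<le> (1 + 8 * E / s) * (s / 2 - E)" by linarith
  then show ?thesis using assms by (simp add: divide_le_eq)
qed

lemma binomial_ratio_le_exp:
  fixes \<sigma> :: real
  assumes "32 \<le> \<sigma>" "real s = \<sigma>^2" "real k \<le> 5 * \<sigma>" "p + k \<le> s" "real s / 2 - 3 * \<sigma> \<le> real (p + k)"
  shows "real ((s - p) choose k) \<le> exp 320 * real ((p + k) choose k)"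
proof -
  define E where "E = 3 * \<sigma> + real k"
  define q where "q = real (s - p) / real (p + 1)"
  have s0: "0 < real s" using assms(1,2) by simp
  have E0: "0 \<le> E" using assms(1) by (simp add: E_def)
  have E8: "E \<le> 8 * \<sigma>" using assms(3) by (simp add: E_def)
  have "32 * \<sigma> \<le> \<sigma> * \<sigma>" using mult_right_mono[OF assms(1), of \<sigma>] assms(1) by simp
  then have Es: "E \<le> real s / 4" using E8 assms(2) by (simp add: power2_eq_square)
  have q0: "0 \<le> q" by (simp add: q_def)
  have "q \<le> (real s / 2 + E) / (real s / 2 - E)"
    unfolding q_def using assms(4,5) Es s0 E0 by (intro frac_le) (auto simp: E_def of_nat_diff)
  also have "\<dots> \<le> 1 + 8 * E / real s" by (rule half_plus_over_half_minus_le[OF s0 E0 Es])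
  finally have "q^k \<le> (1 + 8 * E / real s)^k" using q0 by (intro power_mono)
  also have "\<dots> \<le> exp (8 * E / real s)^k"
    using E0 s0 by (intro power_mono) (auto intro: order.trans[OF _ exp_ge_add_one_self])
  also have "\<dots> = exp (8 * E * real k / real s)" by (simp add: exp_of_nat_mult[symmetric] algebra_simps)
  also have "\<dots> \<le> exp 320"
  proof -
    have "E * real k \<le> 8 * \<sigma> * (5 * \<sigma>)" using E8 assms(3) E0 by (intro mult_mono) auto
    then have "8 * E * real k \<le> 320 * real s" using assms(2) by (simp add: power2_eq_square)
    then show ?thesis using s0 by (simp add: field_simps)
  qed
  finally have qk: "q^k \<le> exp 320" .
  have "real ((s - p) choose k) \<le> q^k * real ((p + k) choose k)"
  proof (rule binomial_le_power_mult[OF _ q0])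
    fix j assume "j < k"
    have "real (s - p) = q * real (p + 1)" by (simp add: q_def)
    also have "\<dots> \<le> q * (real (p + k) - real j)" using \<open>j < k\<close> q0 by (intro mult_left_mono) auto
    finally show "real (s - p) - real j \<le> q * (real (p + k) - real j)" by simp
  qed simp
  also have "\<dots> \<le> exp 320 * real ((p + k) choose k)" using qk by (intro mult_right_mono) auto
  finally show ?thesis .
qed

lemma card_Un_Int_disjoint:
  assumes "finite S" "U \<subseteq> S - Z"
  shows "card ((Z \<union> U) \<inter> S) = card (Z \<inter> S) + card U"
proof -
  have "(Z \<union> U) \<inter> S = (Z \<inter> S) \<union> U" "(Z \<inter> S) \<inter> U = {}" using assms(2) by auto
  moreover have "finite U" using assms finite_subset by blast
  ultimately show ?thesis using assms(1) by (simp add: card_Un_disjoint)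
qed

lemma card_extensions_le:
  fixes S Z :: "'a set" and Q :: "'a set set" and \<sigma> :: real
  assumes "finite S" "32 \<le> \<sigma>" "real (card S) = \<sigma>^2" "real k \<le> 5 * \<sigma>"
    and "\<And>U. U \<in> Q \<Longrightarrow> U \<subseteq> S - Z \<and> card U = k \<and> real (card S) / 2 - 3 * \<sigma> \<le> real (card ((Z \<union> U) \<inter> S))"
  shows "real (card Q) \<le> exp 320 * real ((card (Z \<inter> S) + k) choose k)"
proof (cases "Q = {}")
  case True
  then show ?thesis by simp
next
  case False
  then obtain U0 where U0: "U0 \<in> Q" by blast
  define p where "p = card (Z \<inter> S)"
  have card_Un: "card ((Z \<union> U) \<inter> S) = p + k" if "U \<subseteq> S - Z" "card U = k" for U
    using card_Un_Int_disjoint[OF assms(1) that(1)] that(2) by (simp add: p_def)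
  have "card Q \<le> card {U. U \<subseteq> S - Z \<and> card U = k}"
    using assms(1,5) by (intro card_mono) (auto intro: finite_subset[of _ "Pow S"])
  also have "\<dots> = card S - p choose k"
    using assms(1) by (simp add: n_subsets card_Diff_subset_Int p_def Int_commute)
  finally have "real (card Q) \<le> real ((card S - p) choose k)" by simp
  also have "\<dots> \<le> exp 320 * real ((p + k) choose k)"
  proof (rule binomial_ratio_le_exp[OF assms(2-4)])
    have U0': "U0 \<subseteq> S - Z" "card U0 = k" using assms(5)[OF U0] by auto
    have "card ((Z \<union> U0) \<inter> S) \<le> card S" using assms(1) by (intro card_mono) auto
    then show "p + k \<le> card S" using card_Un[OF U0'] by simp
    show "real (card S) / 2 - 3 * \<sigma> \<le> real (p + k)"
      using assms(5)[OF U0] card_Un[OF U0'] by simp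
  qed
  finally show ?thesis by (simp add: p_def)
qed

lemma sum_downshifts_eq:
  fixes G D :: "'a set set" and f :: "'a set \<Rightarrow> real"
  assumes "finite S" "finite G" "finite D"
  shows "(\<Sum>Z\<in>G. \<Sum>U\<in>{U. U \<subseteq> Z \<inter> S \<and> card U = k}. f Z * of_bool (Z - U \<in> D))
           = (\<Sum>Z\<in>D. \<Sum>U\<in>{U. U \<subseteq> S - Z \<and> card U = k \<and> Z \<union> U \<in> G}. f (Z \<union> U))"
proof -
  define Us where "Us Z = {U. U \<subseteq> Z \<inter> S \<and> card U = k}" for Z
  define Ext where "Ext Z = {U. U \<subseteq> S - Z \<and> card U = k \<and> Z \<union> U \<in> G}" for Z
  have fin: "finite (Us Z)" "finite (Ext Z)" for Z
    using assms(1) by (auto simp: Us_def Ext_def intro: finite_subset[of _ "Pow S"])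
  have Un_Diff_eq: "Z \<union> U - U = Z" if "U \<subseteq> S - Z" for Z U using that by auto
  have finSigma: "finite (Sigma G Us)" using assms(2) fin by simp
  have "(\<Sum>Z\<in>G. \<Sum>U\<in>Us Z. f Z * of_bool (Z - U \<in> D)) = (\<Sum>(Z, U)\<in>Sigma G Us. f Z * of_bool (Z - U \<in> D))"
    by (intro sum.Sigma) (use assms(2) fin in auto)
  also have "\<dots> = (\<Sum>p\<in>Sigma G Us \<inter> {p. fst p - snd p \<in> D}. f (fst p))"
    using finSigma by (simp add: split_def)
  also have "\<dots> = (\<Sum>(Z, U)\<in>Sigma D Ext. f (Z \<union> U))"
    by (rule sum.reindex_bij_witness[where i="\<lambda>(Z, U). (Z \<union> U, U)" and j="\<lambda>(Z, U). (Z - U, U)"])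
      (auto simp: Us_def Ext_def Un_absorb2 Diff_partition Un_Diff_eq)
  also have "\<dots> = (\<Sum>Z\<in>D. \<Sum>U\<in>Ext Z. f (Z \<union> U))"
    by (intro sum.Sigma[symmetric]) (use assms(3) fin in auto)
  finally show ?thesis by (simp add: Us_def Ext_def)
qed

text \<open>Each $Z \in G$ spreads unit weight evenly over its $k$-subsets $U \subseteq Z \cap S$; the pair
  $(Z, U)$ is charged to $Z$ or to $Z - U$, whichever lies in $D$.\<close>

lemma card_le_by_downshifts:
  fixes G D :: "'a set set" and S :: "'a set" and M :: real
  assumes "finite S" "finite G" "finite D"
    and large: "\<And>Z. Z \<in> G \<Longrightarrow> k \<le> card (Z \<inter> S)"
    and hit: "\<And>Z U. Z \<in> G \<Longrightarrow> U \<subseteq> Z \<inter> S \<Longrightarrow> card U = k \<Longrightarrow> Z \<in> D \<or> Z - U \<in> D"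
    and few: "\<And>Z. Z \<in> D \<Longrightarrow>
      real (card {U. U \<subseteq> S - Z \<and> card U = k \<and> Z \<union> U \<in> G}) \<le> M * real ((card (Z \<inter> S) + k) choose k)"
  shows "real (card G) \<le> (1 + M) * real (card D)"
proof -
  define Us where "Us Z = {U. U \<subseteq> Z \<inter> S \<and> card U = k}" for Z
  define Ext where "Ext Z = {U. U \<subseteq> S - Z \<and> card U = k \<and> Z \<union> U \<in> G}" for Z
  define w where "w Z = 1 / real (card (Z \<inter> S) choose k)" for Z
  have "card (Us Z) = card (Z \<inter> S) choose k" for Z
    unfolding Us_def using assms(1) by (intro n_subsets) simp
  then have unit: "real (card (Us Z)) * w Z = 1" if "Z \<in> G" for Z
    using large[OF that] by (simp add: w_def)
  have "real (card G) = (\<Sum>Z\<in>G. \<Sum>U\<in>Us Z. w Z)" by (simp add: unit)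
  also have "\<dots> \<le> (\<Sum>Z\<in>G. \<Sum>U\<in>Us Z. w Z * of_bool (Z \<in> D) + w Z * of_bool (Z - U \<in> D))"
  proof (intro sum_mono)
    fix Z U assume "Z \<in> G" "U \<in> Us Z"
    then have "Z \<in> D \<or> Z - U \<in> D" using hit by (auto simp: Us_def)
    moreover have "0 \<le> w Z" by (simp add: w_def)
    ultimately show "w Z \<le> w Z * of_bool (Z \<in> D) + w Z * of_bool (Z - U \<in> D)" by auto
  qed
  also have "\<dots> = (\<Sum>Z\<in>G. of_bool (Z \<in> D)) + (\<Sum>Z\<in>G. \<Sum>U\<in>Us Z. w Z * of_bool (Z - U \<in> D))"
  proof -
    have "(\<Sum>Z\<in>G. \<Sum>U\<in>Us Z. w Z * of_bool (Z \<in> D)) = (\<Sum>Z\<in>G. of_bool (Z \<in> D))"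
      by (rule sum.cong[OF refl]) (use unit in \<open>auto simp: mult.assoc[symmetric]\<close>)
    then show ?thesis by (simp only: sum.distrib)
  qed
  also have "(\<Sum>Z\<in>G. \<Sum>U\<in>Us Z. w Z * of_bool (Z - U \<in> D)) = (\<Sum>Z\<in>D. \<Sum>U\<in>Ext Z. w (Z \<union> U))"
    unfolding Us_def Ext_def by (rule sum_downshifts_eq[OF assms(1-3)])
  finally have split: "real (card G) \<le> (\<Sum>Z\<in>G. of_bool (Z \<in> D)) + (\<Sum>Z\<in>D. \<Sum>U\<in>Ext Z. w (Z \<union> U))" .
  have "(\<Sum>Z\<in>G. of_bool (Z \<in> D)) \<le> real (card D)"
    using assms(2,3) by (simp add: card_mono)
  moreover have "(\<Sum>U\<in>Ext Z. w (Z \<union> U)) \<le> M" if "Z \<in> D" for Z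
  proof -
    have "w (Z \<union> U) = 1 / real ((card (Z \<inter> S) + k) choose k)" if "U \<in> Ext Z" for U
      using that card_Un_Int_disjoint[OF assms(1)] by (simp add: Ext_def w_def)
    then have "(\<Sum>U\<in>Ext Z. w (Z \<union> U)) = real (card (Ext Z)) / real ((card (Z \<inter> S) + k) choose k)"
      by simp
    also have "\<dots> \<le> M" using few[OF that] by (simp add: Ext_def pos_divide_le_eq)
    finally show ?thesis .
  qed
  then have "(\<Sum>Z\<in>D. \<Sum>U\<in>Ext Z. w (Z \<union> U)) \<le> M * real (card D)"
    using sum_mono[of D "\<lambda>Z. \<Sum>U\<in>Ext Z. w (Z \<union> U)" "\<lambda>_. M"] by (simp add: mult.commute)
  ultimately show ?thesis using split by (simp add: algebra_simps)
qed

lemma card_Pow_moderately_above_half_ge: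
  fixes A S :: "'a set" and c :: real
  assumes "finite A" "S \<subseteq> A" "S \<noteq> {}" "0 \<le> c" "c < 0.01"
  defines "a \<equiv> real (card A)" and "s \<equiv> real (card S)"
  shows "2 ^ card A / 12 \<le> real (card {Z\<in>Pow A. c * sqrt a < real (card Z) - a / 2
           \<and> real (card Z) - a / 2 \<le> 3 * sqrt a \<and> - 3 * sqrt s \<le> real (card (Z \<inter> S)) - s / 2})"
    (is "_ \<le> real (card ?Good)")
proof -
  define N :: real where "N = 2 ^ card A"
  define Up where "Up = {Z\<in>Pow A. c * sqrt a < real (card Z) - a / 2}"
  define Far where "Far = {Z\<in>Pow A. 3 * sqrt a < real (card Z) - a / 2}"
  define Low where "Low = {Z\<in>Pow A. real (card (Z \<inter> S)) - s / 2 < - 3 * sqrt s}"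
  have A0: "0 < card A" and S0: "0 < card S"
    using assms(1-3) by (auto simp: card_gt_0_iff finite_subset)
  have fin: "finite Far" "finite Low" "finite ?Good" using assms(1) by (auto simp: Far_def Low_def)
  have "0.15 * N \<le> real (card Up)"
    using card_Pow_upper_tail_ge[OF assms(1) A0 assms(4,5)] by (simp add: Up_def N_def a_def)
  have "real (card Far) \<le> card {Z\<in>Pow A. 3 * sqrt a \<le> \<bar>real (card (Z \<inter> A)) - real (card (A \<inter> A)) / 2\<bar>}"
    unfolding of_nat_le_iff using assms(1) by (intro card_mono) (auto simp: Far_def a_def Int_absorb2)
  also have "\<dots> \<le> a * N / (4 * (3 * sqrt a)^2)"
    using card_Pow_card_Int_far_from_mean_le[OF assms(1), of "3 * sqrt a" A] A0
    by (simp add: a_def N_def)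
  also have "\<dots> = N / 36" using A0 by (simp add: a_def power_mult_distrib)
  finally have "real (card Far) \<le> N / 36" .
  have "real (card Low) \<le> card {Z\<in>Pow A. 3 * sqrt s \<le> \<bar>real (card (Z \<inter> S)) - real (card (A \<inter> S)) / 2\<bar>}"
    unfolding of_nat_le_iff using assms(1,2) by (intro card_mono) (auto simp: Low_def s_def Int_absorb1)
  also have "\<dots> \<le> s * N / (4 * (3 * sqrt s)^2)"
    using card_Pow_card_Int_far_from_mean_le[OF assms(1), of "3 * sqrt s" S] S0 assms(2)
    by (simp add: s_def N_def Int_absorb1)
  also have "\<dots> = N / 36" using S0 by (simp add: s_def power_mult_distrib)
  finally have "real (card Low) \<le> N / 36" .
  have "Up \<subseteq> ?Good \<union> (Far \<union> Low)" by (auto simp: Up_def Far_def Low_def)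
  then have "card Up \<le> card ?Good + (card Far + card Low)"
    using fin by (meson card_Un_le card_mono finite_UnI add_left_mono order_trans)
  then have "real (card Up) \<le> real (card ?Good) + real (card Far) + real (card Low)" by linarith
  with \<open>0.15 * N \<le> real (card Up)\<close> \<open>real (card Far) \<le> N / 36\<close> \<open>real (card Low) \<le> N / 36\<close>
  show ?thesis by (simp add: N_def)
qed

lemma nat_ceiling_three_sqrt_bounds:
  fixes a s :: real
  assumes "1024 \<le> s" "a \<le> 2 * s"
  shows "3 * sqrt a \<le> real (nat \<lceil>3 * sqrt a\<rceil>)" "real (nat \<lceil>3 * sqrt a\<rceil>) \<le> 5 * sqrt s"
proof -
  have "32 \<le> sqrt s" using assms(1) by (auto intro: real_le_rsqrt)
  moreover have "(1.5 * sqrt s)^2 = 2.25 * s" using assms(1) by (simp add: power_divide power_mult_distrib)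
  then have "sqrt a \<le> 1.5 * sqrt s" using assms by (intro real_le_lsqrt) auto
  moreover have "3 * sqrt a \<le> of_int \<lceil>3 * sqrt a\<rceil>" "of_int \<lceil>3 * sqrt a\<rceil> \<le> 3 * sqrt a + 1"
    by (rule le_of_int_ceiling, rule of_int_ceiling_le_add_one)
  ultimately show "3 * sqrt a \<le> real (nat \<lceil>3 * sqrt a\<rceil>)" "real (nat \<lceil>3 * sqrt a\<rceil>) \<le> 5 * sqrt s"
    by linarith+
qed

lemma card_disagree_threshold_ge:
  fixes A S :: "'a set" and c :: real and G :: "'a set \<Rightarrow> bool"
  assumes "finite A" "S \<subseteq> A" "card A \<le> 2 * card S" "2048 \<le> card A" "0 \<le> c" "c < 0.01"
    and antitone: "\<And>Z U. Z \<subseteq> A \<Longrightarrow> U \<subseteq> Z \<inter> S \<Longrightarrow> G Z \<Longrightarrow> G (Z - U)"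
  shows "2 ^ card A / (12 * (1 + exp 320))
           \<le> real (card {Z\<in>Pow A. G Z \<noteq> (real (card A) / 2 + c * sqrt (real (card A)) < real (card Z))})"
proof -
  define a where "a = real (card A)"
  define s where "s = real (card S)"
  define \<sigma> where "\<sigma> = sqrt s"
  define k where "k = nat \<lceil>3 * sqrt a\<rceil>"
  define F where "F Z \<longleftrightarrow> a / 2 + c * sqrt a < real (card Z)" for Z :: "'a set"
  define D where "D = {Z\<in>Pow A. G Z \<noteq> F Z}"
  define Good where "Good = {Z\<in>Pow A. c * sqrt a < real (card Z) - a / 2
    \<and> real (card Z) - a / 2 \<le> 3 * sqrt a \<and> - 3 * \<sigma> \<le> real (card (Z \<inter> S)) - s / 2}"
  have finS: "finite S" using assms(1,2) finite_subset by blast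
  have s_ge: "1024 \<le> s" and a_le: "a \<le> 2 * s" using assms(3,4) by (simp_all add: a_def s_def)
  have \<sigma>: "32 \<le> \<sigma>" "s = \<sigma>^2"
    unfolding \<sigma>_def using s_ge by (auto intro: real_le_rsqrt)
  have k: "3 * sqrt a \<le> real k" "real k \<le> 5 * \<sigma>"
    using nat_ceiling_three_sqrt_bounds[OF s_ge a_le] by (simp_all add: k_def \<sigma>_def a_def)
  have "2 ^ card A / 12 \<le> real (card Good)"
  proof -
    have "S \<noteq> {}" using s_ge by (auto simp: s_def)
    from card_Pow_moderately_above_half_ge[OF assms(1,2) this assms(5,6)] show ?thesis
      by (simp add: Good_def a_def s_def \<sigma>_def)
  qed
  also have "real (card Good) \<le> (1 + exp 320) * real (card D)"
  proof (rule card_le_by_downshifts[where S = S and k = k])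
    show "finite S" "finite Good" "finite D" using finS assms(1) by (simp_all add: Good_def D_def)
    show "k \<le> card (Z \<inter> S)" if "Z \<in> Good" for Z
    proof -
      have "16 * \<sigma> \<le> \<sigma> * \<sigma>" using mult_right_mono[OF \<sigma>(1), of \<sigma>] \<sigma>(1) by simp
      then show ?thesis using that k(2) \<sigma>(2) by (simp add: Good_def power2_eq_square)
    qed
    show "Z \<in> D \<or> Z - U \<in> D" if "Z \<in> Good" "U \<subseteq> Z \<inter> S" "card U = k" for Z U
    proof -
      have ZA: "Z \<subseteq> A" using that(1) by (simp add: Good_def)
      have "finite Z" using ZA assms(1) finite_subset by blast
      then have "card (Z - U) = card Z - card U" "card U \<le> card Z"
        using that(2) by (auto intro: card_Diff_subset card_mono finite_subset)
      then have "real (card (Z - U)) = real (card Z) - real k" using that(3) by (simp add: of_nat_diff)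
      moreover have "0 \<le> c * sqrt a" using assms(5) by (simp add: a_def)
      ultimately have "\<not> F (Z - U)" and "F Z" using that(1) k(1) by (auto simp: F_def Good_def)
      then show ?thesis using antitone[OF ZA that(2)] ZA by (auto simp: D_def)
    qed
    show "real (card {U. U \<subseteq> S - Z \<and> card U = k \<and> Z \<union> U \<in> Good})
            \<le> exp 320 * real ((card (Z \<inter> S) + k) choose k)" for Z
      by (rule card_extensions_le[OF finS \<sigma>(1) _ k(2)]) (auto simp: \<sigma>(2)[symmetric] s_def Good_def)
  qed
  finally show ?thesis
    by (simp add: D_def F_def a_def divide_le_eq add_pos_pos algebra_simps)
qed

lemma card_cube_filter_eq:
  "card {x\<in>cube A. P x} = card {Z\<in>Pow A. P (\<lambda>i. i \<in> A \<and> (i \<in> Z) \<noteq> r i)}"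
proof -
  have "(\<lambda>i. i \<in> A \<and> (i \<in> {j\<in>A. x j \<noteq> r j}) \<noteq> r i) = x" if "x \<in> cube A" for x
    using that by (auto simp: cube_def)
  then have "bij_betw (\<lambda>Z i. i \<in> A \<and> (i \<in> Z) \<noteq> r i)
      {Z\<in>Pow A. P (\<lambda>i. i \<in> A \<and> (i \<in> Z) \<noteq> r i)} {x\<in>cube A. P x}"
    by (intro bij_betw_byWitness[where f' = "\<lambda>x. {i\<in>A. x i \<noteq> r i}"]) (auto simp: cube_def)
  then show ?thesis by (simp add: bij_betw_same_card)
qed

lemma fdist_threshold_monotone_ge:
  fixes r :: "nat \<Rightarrow> bool" and c :: real
  assumes "finite A" "2048 \<le> card A" "card A \<le> 2 * card {i\<in>A. r i}" "0 \<le> c" "c < 0.01"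
    and "monotone_cube A g"
  shows "1 / (12 * (1 + exp 320))
           \<le> fdist A (\<lambda>x. real (card A) / 2 + c * sqrt (real (card A)) < real (card {i\<in>A. x i \<noteq> r i})) g"
proof -
  define point where "point Z i \<longleftrightarrow> i \<in> A \<and> (i \<in> Z) \<noteq> r i" for Z i
  have point_cube: "point Z \<in> cube A" for Z by (simp add: point_def cube_def)
  have flips: "{i\<in>A. point Z i \<noteq> r i} = Z" if "Z \<subseteq> A" for Z using that by (auto simp: point_def)
  have "g (point (Z - U))" if "U \<subseteq> Z \<inter> {i\<in>A. r i}" "g (point Z)" for Z U
  proof -
    have "\<forall>i\<in>A. point Z i \<longrightarrow> point (Z - U) i" using that(1) by (auto simp: point_def)
    then show ?thesis using assms(6) point_cube that(2) unfolding monotone_cube_def by blast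
  qed
  then have "2 ^ card A / (12 * (1 + exp 320)) \<le> real (card {Z\<in>Pow A. g (point Z)
      \<noteq> (real (card A) / 2 + c * sqrt (real (card A)) < real (card Z))})"
    by (intro card_disagree_threshold_ge[OF assms(1) _ assms(3,2,4,5)]) auto
  also have "{Z\<in>Pow A. g (point Z) \<noteq> (real (card A) / 2 + c * sqrt (real (card A)) < real (card Z))}
      = {Z\<in>Pow A. (real (card A) / 2 + c * sqrt (real (card A)) < real (card {i\<in>A. point Z i \<noteq> r i}))
          \<noteq> g (point Z)}"
    using flips by auto
  finally show ?thesis
    unfolding fdist_def card_cube_filter_eq[where r = r] point_def
    by (simp add: field_simps add_pos_pos)
qed

lemma h_minus_0_xorv_iff:
  "h_minus_0 c A (xorv x r)
     \<longleftrightarrow> real (card A) / 2 + c * sqrt (real (card A)) < real (card {i\<in>A. x i \<noteq> r i})"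
  by (simp add: h_minus_0_def hweight_def xorv_def)

lemma h_minus_1_xorv_iff:
  assumes "finite A"
  shows "h_minus_1 c A (xorv x r)
     \<longleftrightarrow> real (card A) / 2 + c * sqrt (real (card A)) < real (card {i\<in>A. x i \<noteq> (\<not> r i)})"
proof -
  have "{i\<in>A. x i \<noteq> (\<not> r i)} = A - {i\<in>A. x i \<noteq> r i}" by auto
  then have "real (card {i\<in>A. x i \<noteq> (\<not> r i)}) = real (card A) - real (card {i\<in>A. x i \<noteq> r i})"
    using assms by (simp add: card_Diff_subset card_mono of_nat_diff)
  then show ?thesis by (auto simp: h_minus_1_def hweight_def xorv_def)
qed

lemma h_minus_xorv_far_from_monotone:
  assumes "finite A" "2048 \<le> card A" "0 \<le> c" "c < 0.01"
  shows "(\<forall>g. monotone_cube A g \<longrightarrow> 1 / (12 * (1 + exp 320)) \<le> fdist A (\<lambda>x. h_minus_0 c A (xorv x r)) g)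
       \<or> (\<forall>g. monotone_cube A g \<longrightarrow> 1 / (12 * (1 + exp 320)) \<le> fdist A (\<lambda>x. h_minus_1 c A (xorv x r)) g)"
proof (cases "card A \<le> 2 * card {i\<in>A. r i}")
  case True
  then show ?thesis
    using fdist_threshold_monotone_ge[OF assms(1,2) True assms(3,4)] by (simp add: h_minus_0_xorv_iff)
next
  case False
  have "{i\<in>A. \<not> r i} = A - {i\<in>A. r i}" by auto
  then have "card {i\<in>A. \<not> r i} = card A - card {i\<in>A. r i}"
    using assms(1) by (simp add: card_Diff_subset)
  with False have "card A \<le> 2 * card {i\<in>A. \<not> r i}" by simp
  then show ?thesis
    using fdist_threshold_monotone_ge[OF assms(1,2) _ assms(3,4), of "\<lambda>i. \<not> r i"]
    by (simp add: h_minus_1_xorv_iff[OF assms(1)])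
qed

theorem mainTheorem7:
  shows "\<exists>\<delta>>0. \<forall>c1::real. 0 < c1 \<and> c1 < 0.01 \<longrightarrow>
           (\<exists>a0::nat. \<forall>a\<ge>a0. \<forall>A::nat set. finite A \<and> card A = a \<longrightarrow>
              (\<forall>r\<in>cube A.
                 (\<forall>g. monotone_cube A g \<longrightarrow> fdist A (\<lambda>x. h_minus_0 c1 A (xorv x r)) g \<ge> \<delta>) \<or>
                 (\<forall>g. monotone_cube A g \<longrightarrow> fdist A (\<lambda>x. h_minus_1 c1 A (xorv x r)) g \<ge> \<delta>)))"
  by (intro exI[of _ "1 / (12 * (1 + exp 320))"] conjI allI impI exI[of _ "2048::nat"] ballI
      h_minus_xorv_far_from_monotone) (auto simp: add_pos_pos)

end
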